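(* Let $n \ge 2$ be an integer, let $1 \le \underline{x}_i < \bar{x}_i$ for $i \in \{1,2\}$, and let $\varepsilon \ge 2^{-2^{n-1}}$. Then for every $(x_1,x_2) \in [\underline{x}_1,\bar{x}_1] \times [\underline{x}_2,\bar{x}_2]$ there exists an $\varepsilon$-feasible point $y \in \mathbb{R}^{n+2}$ with $y_n = 0$ for the lower-level problem $$\max_{y \in \mathbb{R}^{n+2}} \; y_1 - y_n\,(x_1 + x_2 - y_{n+1} - y_{n+2})$$ subject to $y_1 + y_n = \tfrac12$, $y_i^2 \le y_{i+1}$ for $i \in \{1,\dots,n-1\}$, $y_i \ge 0$ for $i \in \{1,\dots,n\}$, $y_{n+1} \in [0,x_1]$, $y_{n+2} \in [-x_2,x_2]$.
   Context: For $\varepsilon>0$, a point is called $\varepsilon$-feasible for an optimization problem with constraints $g(y) \le 0$, $h(y)=0$ if all linear constraints are satisfied exactly and every nonlinear inequality constraint $g_i$ satisfies $g_i(y) \le \varepsilon$ and every nonlinear equality constraint $h_j$ satisfies $|h_j(y)| \le \varepsilon$. In the lower-level problem here, the only nonlinear constraints are $y_i^2 - y_{i+1} \le 0$, $i \in \{1,\dots,n-1\}$; all other constraints must hold exactly. *)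

theory Defs
  imports Complex_Main
begin

text \<open>Vectors y in R^(n+2) are represented as functions nat => real, using the
components y 1, ..., y (n+2); other values are irrelevant.\<close>

definition ll_objective :: "nat \<Rightarrow> real \<Rightarrow> real \<Rightarrow> (nat \<Rightarrow> real) \<Rightarrow> real" where
  "ll_objective n x1 x2 y = y 1 - y n * (x1 + x2 - y (n+1) - y (n+2))"

definition ll_linear_feasible :: "nat \<Rightarrow> real \<Rightarrow> real \<Rightarrow> (nat \<Rightarrow> real) \<Rightarrow> bool" where
  "ll_linear_feasible n x1 x2 y \<longleftrightarrow>
     y 1 + y n = 1/2 \<and>
     (\<forall>i\<in>{1..n}. y i \<ge> 0) \<and>
     0 \<le> y (n+1) \<and> y (n+1) \<le> x1 \<and>
     - x2 \<le> y (n+2) \<and> y (n+2) \<le> x2"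

definition ll_g :: "(nat \<Rightarrow> real) \<Rightarrow> nat \<Rightarrow> real" where
  "ll_g y i = (y i)^2 - y (i+1)"

definition ll_eps_feasible :: "real \<Rightarrow> nat \<Rightarrow> real \<Rightarrow> real \<Rightarrow> (nat \<Rightarrow> real) \<Rightarrow> bool" where
  "ll_eps_feasible \<epsilon> n x1 x2 y \<longleftrightarrow>
     ll_linear_feasible n x1 x2 y \<and> (\<forall>i\<in>{1..n-1}. ll_g y i \<le> \<epsilon>)"

end

theory Submission
  imports Defs
begin

text \<open>The chain \<open>y i = (1/2) ^ 2 ^ (i - 1)\<close> satisfies \<open>(y i)\<^sup>2 = y (i + 1)\<close> exactly
  and starts with \<open>y 1 = 1/2\<close>. Truncating it by \<open>y n = 0\<close> (and \<open>y (n+1) = y (n+2) = 0\<close>)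
  keeps every linear constraint and violates only the last nonlinear one, by
  \<open>(y (n - 1))\<^sup>2 = (1/2) ^ 2 ^ (n - 1) \<le> \<epsilon>\<close>.\<close>

definition truncated_squaring_chain :: "nat \<Rightarrow> nat \<Rightarrow> real" where
  "truncated_squaring_chain n i = (if i < n then (1/2) ^ (2 ^ (i - 1)) else 0)"

lemma power_two_power_squared:
  fixes a :: "'a :: monoid_mult"
  shows "(a ^ (2 ^ k))\<^sup>2 = a ^ (2 ^ Suc k)"
  by (simp add: power_mult[symmetric] mult.commute)

lemma truncated_squaring_chain_linear_feasible:
  assumes "n \<ge> 2" and "0 \<le> x1" and "0 \<le> x2"
  shows "ll_linear_feasible n x1 x2 (truncated_squaring_chain n)"
  using assms by (simp add: ll_linear_feasible_def truncated_squaring_chain_def)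

lemma ll_g_truncated_squaring_chain:
  assumes "1 \<le> i" and "i < n"
  shows "ll_g (truncated_squaring_chain n) i = (if i + 1 < n then 0 else (1/2) ^ (2 ^ (n - 1)))"
proof -
  obtain k where k: "i = Suc k"
    using assms(1) by (cases i) auto
  have "(truncated_squaring_chain n i)\<^sup>2 = (1/2) ^ (2 ^ i)"
    using assms(2) k power_two_power_squared[of "1/2 :: real" k]
    by (simp add: truncated_squaring_chain_def)
  moreover have "i = n - 1" if "\<not> i + 1 < n"
    using that assms(2) by simp
  ultimately show ?thesis
    using assms by (auto simp: ll_g_def truncated_squaring_chain_def)
qed

lemma truncated_squaring_chain_eps_feasible:
  assumes "n \<ge> 2" and "0 \<le> x1" and "0 \<le> x2" and "\<epsilon> \<ge> (1/2) ^ (2 ^ (n - 1))"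
  shows "ll_eps_feasible \<epsilon> n x1 x2 (truncated_squaring_chain n)"
proof -
  have "0 \<le> \<epsilon>"
    using assms(4) zero_le_power[of "1/2 :: real" "2 ^ (n - 1)"] by linarith
  then have "ll_g (truncated_squaring_chain n) i \<le> \<epsilon>" if "i \<in> {1..n-1}" for i
    using that assms(1,4) ll_g_truncated_squaring_chain[of i n] by auto
  then show ?thesis
    using truncated_squaring_chain_linear_feasible[OF assms(1-3)]
    by (simp add: ll_eps_feasible_def)
qed

theorem mainTheorem4:
  fixes n :: nat and xl1 xu1 xl2 xu2 \<epsilon> x1 x2 :: real
  assumes "n \<ge> 2"
    and "1 \<le> xl1" and "xl1 < xu1" and "1 \<le> xl2" and "xl2 < xu2"
    and "\<epsilon> \<ge> (1/2) ^ (2 ^ (n - 1))"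
    and "x1 \<in> {xl1..xu1}" and "x2 \<in> {xl2..xu2}"
  shows "\<exists>y :: nat \<Rightarrow> real. ll_eps_feasible \<epsilon> n x1 x2 y \<and> y n = 0"
proof
  have "0 \<le> x1" and "0 \<le> x2"
    using assms(2,4,7,8) by auto
  then show "ll_eps_feasible \<epsilon> n x1 x2 (truncated_squaring_chain n) \<and> truncated_squaring_chain n n = 0"
    using truncated_squaring_chain_eps_feasible assms(1,6)
    by (simp add: truncated_squaring_chain_def)
qed

end
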